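(* Let $A=\mathbb{k}[x_1,\dots,x_N]$ and let $K_\bullet$ be its Koszul bimodule resolution (defined in the context). Define left $A$-module maps $t_{-1}\colon A\to A\otimes A$ by $t_{-1}(1)=1\otimes 1$, and, for $p\ge 0$, $t_p\colon K_p\to K_{p+1}$ on the left $A$-basis elements $1\otimes(x_{j_1}\wedge\cdots\wedge x_{j_p})\otimes \underline{x}^{\underline{\ell}}$ ($1\le j_1<\cdots<j_p\le N$, $\underline{\ell}\in\mathbb{N}^N$) by $$t_p\big(1\otimes(x_{j_1}\wedge\cdots\wedge x_{j_p})\otimes\underline{x}^{\underline{\ell}}\big)=(-1)^{p+1}\sum_{j_{p+1}=j_p+1}^{N}\ \sum_{r=1}^{\ell_{j_{p+1}}} x_{j_{p+1}}^{\ell_{j_{p+1}}-r}x_{j_{p+1}+1}^{\ell_{j_{p+1}+1}}\cdots x_N^{\ell_N}\otimes(x_{j_1}\wedge\cdots\wedge x_{j_{p+1}})\otimes x_1^{\ell_1}\cdots x_{j_{p+1}-1}^{\ell_{j_{p+1}-1}}x_{j_{p+1}}^{r-1},$$ with the convention $j_0=0$ when $p=0$ (so that $x_{j_1}\wedge\cdots\wedge x_{j_{p+1}}=x_{j_1}$ for $p=0$), and extended left $A$-linearly (the sum is empty, hence $t_p=0$ on such an element, if $j_p=N$). Then $d_0t_{-1}=\mathrm{Id}_A$ and $t_{p-1}d_p+d_{p+1}t_p=\mathrm{Id}_{K_p}$ for all $p\ge 0$; that is, $(t_p)_{p\ge -1}$ is a chain contraction of $K_\bullet$.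
   Context: $\mathbb{k}$ is a field, $V$ is a $\mathbb{k}$-vector space with basis $x_1,\dots,x_N$, and $A=S(V)=\mathbb{k}[x_1,\dots,x_N]$. For $\underline{\ell}=(\ell_1,\dots,\ell_N)\in\mathbb{N}^N$ write $\underline{x}^{\underline{\ell}}=x_1^{\ell_1}\cdots x_N^{\ell_N}$. The Koszul resolution $K_\bullet$ has $K_p=A\otimes\bigwedge^p(V)\otimes A$ ($0\le p\le N$; $K_p=0$ for $p>N$), a free $A$-bimodule with basis $1\otimes(x_{j_1}\wedge\cdots\wedge x_{j_p})\otimes 1$, $1\le j_1<\cdots<j_p\le N$; the augmentation $d_0\colon A\otimes A\to A$ is multiplication, and for $p\ge1$ the $A$-bimodule map $d_p$ is $$d_p(1\otimes(x_{j_1}\wedge\cdots\wedge x_{j_p})\otimes 1)=\sum_{i=1}^p(-1)^{i+1}x_{j_i}\otimes(x_{j_1}\wedge\cdots\widehat{x_{j_i}}\cdots\wedge x_{j_p})\otimes 1-\sum_{i=1}^p(-1)^{i+1}\otimes(x_{j_1}\wedge\cdots\widehat{x_{j_i}}\cdots\wedge x_{j_p})\otimes x_{j_i},$$ where the hat denotes omission. All tensor products are over $\mathbb{k}$. The maps $t_p$ are regarded as maps of complexes of left $A$-modules in the identity $t_{-1}d_0+d_1t_0=\mathrm{Id}$ on $K_0=A\otimes A$. *)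

theory Defs
  imports Main "HOL-Library.Function_Algebras"
begin

text \<open>A monomial x_1^l_1 ... x_N^l_N is an exponent vector
  l :: nat => nat supported in {1..N}. The polynomial ring A = k[x_1..x_N] is the
  k-vector space of finitely supported functions from monomials to k.
  K_p = A (x) Lambda^p V (x) A is the k-vector space with basis the triples
  (a, J, b) (meaning x^a (x) (x_j1 /\ ... /\ x_jp) (x) x^b, with J = {j1 < ... < jp}),
  elements being finitely supported functions on such triples.\<close>

definition monoms :: "nat \<Rightarrow> (nat \<Rightarrow> nat) set" where
  "monoms N = {a. \<forall>i. a i \<noteq> 0 \<longrightarrow> i \<in> {1..N}}"

definition Apoly :: "nat \<Rightarrow> ((nat \<Rightarrow> nat) \<Rightarrow> 'k::field) set" where
  "Apoly N = {f. finite {a. f a \<noteq> 0} \<and> (\<forall>a. f a \<noteq> 0 \<longrightarrow> a \<in> monoms N)}"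

definition Kmod :: "nat \<Rightarrow> nat \<Rightarrow> ((nat \<Rightarrow> nat) \<times> nat set \<times> (nat \<Rightarrow> nat) \<Rightarrow> 'k::field) set" where
  "Kmod N p = {c. finite {y. c y \<noteq> 0} \<and>
     (\<forall>a J b. c (a, J, b) \<noteq> 0 \<longrightarrow> a \<in> monoms N \<and> b \<in> monoms N \<and> J \<subseteq> {1..N} \<and> card J = p)}"

definition lin_ext :: "('b \<Rightarrow> 'c \<Rightarrow> 'k::field) \<Rightarrow> ('b \<Rightarrow> 'k) \<Rightarrow> 'c \<Rightarrow> 'k" where
  "lin_ext g c = (\<lambda>y. \<Sum>b\<in>{b. c b \<noteq> 0}. c b * g b y)"

definition bvec :: "'b \<Rightarrow> 'b \<Rightarrow> 'k::field" where
  "bvec b = (\<lambda>y. if y = b then 1 else 0)"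

definition ue :: "nat \<Rightarrow> nat \<Rightarrow> nat" where
  "ue j = (\<lambda>i. if i = j then 1 else 0)"

definition madd :: "(nat \<Rightarrow> nat) \<Rightarrow> (nat \<Rightarrow> nat) \<Rightarrow> nat \<Rightarrow> nat" where
  "madd a b = (\<lambda>i. a i + b i)"

definition zmono :: "nat \<Rightarrow> nat" where
  "zmono = (\<lambda>_. 0)"

text \<open>Koszul differential d_p (p >= 1) on the basis element x^a (x) x_J (x) x^b
  (bimodule extension of the formula on 1 (x) x_J (x) 1); the position i of j in
  J = {j1<...<jp} is card {j' in J. j' < j} + 1, giving the sign (-1)^(i+1).\<close>
definition kd_basis :: "(nat \<Rightarrow> nat) \<times> nat set \<times> (nat \<Rightarrow> nat)
    \<Rightarrow> (nat \<Rightarrow> nat) \<times> nat set \<times> (nat \<Rightarrow> nat) \<Rightarrow> 'k::field" where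
  "kd_basis x = (case x of (a, J, b) \<Rightarrow> (\<lambda>y. \<Sum>j\<in>J. (-1) ^ card {i\<in>J. i < j} *
       (bvec (madd a (ue j), J - {j}, b) y - bvec (a, J - {j}, madd b (ue j)) y)))"

definition kd :: "((nat \<Rightarrow> nat) \<times> nat set \<times> (nat \<Rightarrow> nat) \<Rightarrow> 'k::field)
    \<Rightarrow> (nat \<Rightarrow> nat) \<times> nat set \<times> (nat \<Rightarrow> nat) \<Rightarrow> 'k" where
  "kd = lin_ext kd_basis"

definition kd0 :: "((nat \<Rightarrow> nat) \<times> nat set \<times> (nat \<Rightarrow> nat) \<Rightarrow> 'k::field)
    \<Rightarrow> (nat \<Rightarrow> nat) \<Rightarrow> 'k" where
  "kd0 = lin_ext (\<lambda>x. case x of (a, J, b) \<Rightarrow> bvec (madd a b))"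

definition tm1 :: "((nat \<Rightarrow> nat) \<Rightarrow> 'k::field)
    \<Rightarrow> (nat \<Rightarrow> nat) \<times> nat set \<times> (nat \<Rightarrow> nat) \<Rightarrow> 'k" where
  "tm1 = lin_ext (\<lambda>a. bvec (a, {}, zmono))"

definition Max0 :: "nat set \<Rightarrow> nat" where
  "Max0 J = (if J = {} then 0 else Max J)"

text \<open>t_p on x^a (x) x_J (x) x^l, i.e. x^a times the left A-basis element
  1 (x) x_J (x) x^l (left A-linear extension), p = card J, j_p = Max0 J
  (convention j_0 = 0).\<close>
definition kt_basis :: "nat \<Rightarrow> (nat \<Rightarrow> nat) \<times> nat set \<times> (nat \<Rightarrow> nat)
    \<Rightarrow> (nat \<Rightarrow> nat) \<times> nat set \<times> (nat \<Rightarrow> nat) \<Rightarrow> 'k::field" where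
  "kt_basis N x = (case x of (a, J, l) \<Rightarrow> (\<lambda>y. (-1) ^ (card J + 1) *
     (\<Sum>m\<in>{Max0 J + 1..N}. \<Sum>r\<in>{1..l m}.
        bvec (madd a (\<lambda>i. if i = m then l m - r else if m < i then l i else 0),
              insert m J,
              (\<lambda>i. if i < m then l i else if i = m then r - 1 else 0)) y)))"

definition kt :: "nat \<Rightarrow> ((nat \<Rightarrow> nat) \<times> nat set \<times> (nat \<Rightarrow> nat) \<Rightarrow> 'k::field)
    \<Rightarrow> (nat \<Rightarrow> nat) \<times> nat set \<times> (nat \<Rightarrow> nat) \<Rightarrow> 'k" where
  "kt N = lin_ext (kt_basis N)"

end

theory Submission
  imports Defs
begin

text \<open>
  The contraction identities are checked on the k-basis of K_p, i.e. on a single basis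
  element e = x^a (x) x_J (x) x^l, and then extended by linearity.

  Write M = j_p for the largest index of J (M = 0 if J is empty) and let
  H = x^a x^(l above M) (x) x_J (x) x^(l up to M) ("shifting" the part of x^l with indices
  above M to the left).  Applying d to t(e), every term of t(e) has a new largest index m > M;
  the face of d removing m telescopes, first over r and then over m, to (-1)^p (H - e), and
  the remaining faces (removing some j in J) give a sum of cross terms.  Applying t to d(e),
  the face removing j in J produces the same cross terms with the opposite overall sign, and
  for j = M an extra boundary term which is exactly H.  Hence t d e + d t e = e for p >= 1, and
  likewise t_(-1) d_0 e + d t e = e for p = 0, where t_(-1) d_0 e = H.
\<close>

type_synonym triple = "(nat \<Rightarrow> nat) \<times> nat set \<times> (nat \<Rightarrow> nat)"

lemma telescope_down:
  fixes m n :: nat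
  assumes "m \<le> n"
  shows "(\<Sum>k\<in>{m+1..n}. f (k - 1) - f k) = f m - (f n :: 'a::ab_group_add)"
proof -
  have "(\<Sum>k\<in>{Suc m..n}. f (k - 1) - f k) = - (\<Sum>k\<in>{Suc m..n}. f k - f (k - 1))"
    by (simp add: sum_negf[symmetric])
  then show ?thesis using sum_telescope''[OF assms, of f] by simp
qed

lemma lin_ext_superset:
  assumes "finite T" "{b. c b \<noteq> 0} \<subseteq> T"
  shows "lin_ext g c y = (\<Sum>t\<in>T. c t * g t y)"
  unfolding lin_ext_def by (rule sum.mono_neutral_left) (use assms in auto)

lemma finite_support_sum:
  assumes "\<And>i. i \<in> I \<Longrightarrow> finite {y. (h i y :: 'k::field) \<noteq> 0}"
  shows "finite {y. (\<Sum>i\<in>I. h i y) \<noteq> 0}"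
proof (cases "finite I")
  case True
  have "{y. (\<Sum>i\<in>I. h i y) \<noteq> 0} \<subseteq> (\<Union>i\<in>I. {y. h i y \<noteq> 0})"
    by (auto elim: sum.not_neutral_contains_not_neutral)
  then show ?thesis using True assms by (auto intro: finite_subset)
qed simp

lemma lin_ext_sum:
  assumes "finite S" "\<And>b. b \<in> S \<Longrightarrow> finite {y. h b y \<noteq> 0}"
  shows "lin_ext g (\<lambda>y. \<Sum>b\<in>S. w b * h b y) y' = (\<Sum>b\<in>S. w b * lin_ext g (h b) y')"
proof -
  define T where "T = (\<Union>b\<in>S. {y. h b y \<noteq> 0})"
  have fT: "finite T" using assms unfolding T_def by auto
  have supp: "{y. h b y \<noteq> 0} \<subseteq> T" if "b \<in> S" for b using that unfolding T_def by auto
  have "{y. (\<Sum>b\<in>S. w b * h b y) \<noteq> 0} \<subseteq> T"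
    by (auto elim!: sum.not_neutral_contains_not_neutral simp: T_def)
  then have "lin_ext g (\<lambda>y. \<Sum>b\<in>S. w b * h b y) y' = (\<Sum>t\<in>T. (\<Sum>b\<in>S. w b * h b t) * g t y')"
    by (rule lin_ext_superset[OF fT])
  also have "\<dots> = (\<Sum>b\<in>S. w b * (\<Sum>t\<in>T. h b t * g t y'))"
    by (simp only: sum_distrib_left sum_distrib_right mult.assoc) (rule sum.swap)
  also have "\<dots> = (\<Sum>b\<in>S. w b * lin_ext g (h b) y')"
    by (intro sum.cong refl) (simp add: lin_ext_superset[OF fT supp])
  finally show ?thesis .
qed

lemma lin_ext_bvec: "lin_ext g (bvec x) = g x"
  by (rule ext, subst lin_ext_superset[of "{x}"]) (auto simp: bvec_def)

lemma lin_ext_bvec_diff: "lin_ext g (\<lambda>y. bvec u y - bvec v y) y' = g u y' - g v y'"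
proof (cases "u = v")
  case True
  then show ?thesis by (simp add: lin_ext_def)
next
  case False
  then show ?thesis by (subst lin_ext_superset[of "{u, v}"]) (auto simp: bvec_def)
qed

lemma finite_support_bvec: "finite {y. (bvec x :: _ \<Rightarrow> 'k::field) y \<noteq> 0}"
  by (rule finite_subset[of _ "{x}"]) (auto simp: bvec_def)

lemma lin_ext_bvec_id:
  assumes "finite {b. c b \<noteq> 0}"
  shows "lin_ext bvec c = (c :: _ \<Rightarrow> 'k::field)"
proof
  fix y
  have "lin_ext bvec c y = (\<Sum>b\<in>{b. c b \<noteq> 0}. if y = b then c y else 0)"
    unfolding lin_ext_def by (rule sum.cong) (auto simp: bvec_def)
  then show "lin_ext bvec c y = c y" using assms by (auto simp: sum.delta)
qed

text \<open>The composite of two linear extensions is the linear extension of the composite on basis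
  vectors; this reduces all identities of the theorem to basis elements.\<close>
lemma lin_ext_compose:
  assumes "finite {b. c b \<noteq> 0}" "\<And>b. finite {z. (h b z :: 'k::field) \<noteq> 0}"
  shows "lin_ext g (lin_ext h c) = lin_ext (\<lambda>b. lin_ext g (h b)) c"
proof
  fix y
  have "lin_ext g (lin_ext h c) y = (\<Sum>b\<in>{b. c b \<noteq> 0}. c b * lin_ext g (h b) y)"
    unfolding lin_ext_def[of h c] by (rule lin_ext_sum) (use assms in auto)
  then show "lin_ext g (lin_ext h c) y = lin_ext (\<lambda>b. lin_ext g (h b)) c y"
    by (simp add: lin_ext_def[of "\<lambda>b. lin_ext g (h b)" c])
qed

lemma lin_ext_add: "lin_ext (\<lambda>b. g1 b + g2 b) c = lin_ext g1 c + (lin_ext g2 c :: _ \<Rightarrow> 'k::field)"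
  by (simp add: lin_ext_def fun_eq_iff distrib_left sum.distrib)

lemma lin_ext_cong:
  "(\<And>b. c b \<noteq> 0 \<Longrightarrow> g b = g' b) \<Longrightarrow> lin_ext g c = lin_ext g' c"
  by (auto simp: lin_ext_def fun_eq_iff intro!: sum.cong)

lemma Max0_ge: "finite J \<Longrightarrow> j \<in> J \<Longrightarrow> j \<le> Max0 J"
  by (auto simp: Max0_def)

lemma Max0_le: "finite J \<Longrightarrow> J \<subseteq> {1..N} \<Longrightarrow> Max0 J \<le> N"
  by (auto simp: Max0_def)

lemma Max0_remove_other:
  assumes "finite J" and "j \<in> J" and "j \<noteq> Max0 J"
  shows "Max0 (J - {j}) = Max0 J"
proof -
  have "J \<noteq> {}" using assms(2) by auto
  then have "Max J \<in> J - {j}" using assms(1,3) by (simp add: Max0_def)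
  moreover have "Max (J - {j}) = Max J" using calculation assms(1) by (intro Max_eqI) auto
  ultimately show ?thesis by (auto simp: Max0_def)
qed

lemma Max0_remove_max:
  assumes "finite J" and "j \<in> J" and "0 < j" and "j = Max0 J"
  shows "Max0 (J - {j}) < j"
proof (cases "J - {j} = {}")
  case False
  then have "Max (J - {j}) \<in> J - {j}" using assms(1) by (intro Max_in) auto
  moreover have "i \<le> j" if "i \<in> J" for i using Max0_ge[OF assms(1) that] assms(4) by simp
  ultimately show ?thesis using False by (force simp: Max0_def)
qed (use assms(3) in \<open>simp add: Max0_def\<close>)

definition kd_face :: "(nat \<Rightarrow> nat) \<Rightarrow> nat set \<Rightarrow> (nat \<Rightarrow> nat) \<Rightarrow> nat \<Rightarrow> triple \<Rightarrow> 'k::field" where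
  "kd_face a J b j = (\<lambda>y. bvec (madd a (ue j), J - {j}, b) y - bvec (a, J - {j}, madd b (ue j)) y)"

lemma kd_basis_faces:
  "kd_basis (a, J, b) = (\<lambda>y. \<Sum>j\<in>J. (-1) ^ card {i\<in>J. i < j} * kd_face a J b j y)"
  by (simp add: kd_basis_def kd_face_def)

lemma finite_support_kd_face: "finite {y. (kd_face a J b j :: _ \<Rightarrow> 'k::field) y \<noteq> 0}"
  by (rule finite_subset[of _ "{(madd a (ue j), J - {j}, b), (a, J - {j}, madd b (ue j))}"])
     (auto simp: kd_face_def bvec_def)

lemma finite_support_kd_basis: "finite {y. (kd_basis x :: _ \<Rightarrow> 'k::field) y \<noteq> 0}"
  by (cases x) (simp add: kd_basis_faces finite_support_sum finite_support_kd_face)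

lemma lin_ext_kd_face:
  "lin_ext g (kd_face a J b j) y = g (madd a (ue j), J - {j}, b) y - g (a, J - {j}, madd b (ue j)) y"
  by (simp add: kd_face_def lin_ext_bvec_diff)

lemma lin_ext_kd_basis:
  assumes "finite J"
  shows "lin_ext g (kd_basis (a, J, b)) y = (\<Sum>j\<in>J. (-1) ^ card {i\<in>J. i < j} *
           (g (madd a (ue j), J - {j}, b) y - g (a, J - {j}, madd b (ue j)) y))"
  unfolding kd_basis_faces
  by (subst lin_ext_sum) (simp_all add: assms finite_support_kd_face lin_ext_kd_face)

lemma kd_basis_insert_max:
  assumes "finite J" and "\<forall>i\<in>J. i < m"
  shows "kd_basis (a, insert m J, b) y = (-1) ^ card J * kd_face a (insert m J) b m y
           + (\<Sum>j\<in>J. (-1) ^ card {i\<in>J. i < j} * (kd_face a (insert m J) b j y :: 'k::field))"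
proof -
  have "m \<notin> J" and "{i \<in> insert m J. i < m} = J" using assms(2) by auto
  moreover have "{i \<in> insert m J. i < j} = {i\<in>J. i < j}" if "j \<in> J" for j
    using assms(2) that by auto
  ultimately show ?thesis
    unfolding kd_basis_faces by (simp add: sum.insert[OF assms(1)] cong: sum.cong)
qed

text \<open>The exponents of the left and right monomials in the (m, r) term of t: the left factor is
  x_m^(l_m - r) x_(m+1)^(l_(m+1)) ... and the right factor x_1^(l_1) ... x_(m-1)^(l_(m-1)) x_m^(r-1).\<close>
definition kt_left :: "(nat \<Rightarrow> nat) \<Rightarrow> nat \<Rightarrow> nat \<Rightarrow> nat \<Rightarrow> nat" where
  "kt_left l m r = (\<lambda>i. if i = m then l m - r else if m < i then l i else 0)"

definition kt_right :: "(nat \<Rightarrow> nat) \<Rightarrow> nat \<Rightarrow> nat \<Rightarrow> nat \<Rightarrow> nat" where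
  "kt_right l m r = (\<lambda>i. if i < m then l i else if i = m then r - 1 else 0)"

definition kt_block :: "(nat \<Rightarrow> nat) \<Rightarrow> nat set \<Rightarrow> (nat \<Rightarrow> nat) \<Rightarrow> nat \<Rightarrow> triple \<Rightarrow> 'k::field" where
  "kt_block a J l m =
     (\<lambda>y. \<Sum>r\<in>{1..l m}. bvec (madd a (kt_left l m r), insert m J, kt_right l m r) y)"

lemma kt_basis_blocks:
  "kt_basis N (a, J, l) = (\<lambda>y. \<Sum>m\<in>{Max0 J + 1..N}. (-1) ^ (card J + 1) * kt_block a J l m y)"
  by (simp add: kt_basis_def kt_block_def kt_left_def kt_right_def sum_distrib_left)

lemma finite_support_kt_block: "finite {y. (kt_block a J l m :: _ \<Rightarrow> 'k::field) y \<noteq> 0}"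
  unfolding kt_block_def by (intro finite_support_sum finite_support_bvec)

lemma finite_support_kt_basis: "finite {y. (kt_basis N x :: _ \<Rightarrow> 'k::field) y \<noteq> 0}"
  by (cases x) (simp add: kt_basis_blocks finite_support_sum finite_support_kt_block)

lemma lin_ext_kt_basis:
  "lin_ext g (kt_basis N (a, J, l)) y = (-1) ^ (card J + 1) *
     (\<Sum>m\<in>{Max0 J + 1..N}. \<Sum>r\<in>{1..l m}. g (madd a (kt_left l m r), insert m J, kt_right l m r) y)"
proof -
  have "lin_ext g (kt_block a J l m) y = (\<Sum>r\<in>{1..l m}. g (madd a (kt_left l m r), insert m J, kt_right l m r) y)" for m
    using lin_ext_sum[of "{1..l m}" "\<lambda>r. bvec (madd a (kt_left l m r), insert m J, kt_right l m r)" g "\<lambda>_. 1"]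
    by (simp add: kt_block_def finite_support_bvec lin_ext_bvec)
  then show ?thesis
    unfolding kt_basis_blocks
    by (subst lin_ext_sum) (simp_all add: finite_support_kt_block sum_distrib_left)
qed

text \<open>The basis element x^a x^(l above M) (x) x_J (x) x^(l up to M).  It interpolates between
  x^(a+l) (x) x_J (x) 1 for M = 0 and the element x^a (x) x_J (x) x^l itself for M = N.\<close>
definition shifted :: "(nat \<Rightarrow> nat) \<Rightarrow> nat set \<Rightarrow> (nat \<Rightarrow> nat) \<Rightarrow> nat \<Rightarrow> triple" where
  "shifted a J l M = (madd a (\<lambda>i. if M < i then l i else 0), J, \<lambda>i. if i \<le> M then l i else 0)"

lemma shifted_top:
  assumes "\<forall>i>N. l i = 0"
  shows "shifted a J l N = (a, J, l)"
  using assms by (auto simp: shifted_def fun_eq_iff madd_def)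

text \<open>Within the block of index m, the faces removing m telescope over r: they move x_m^(l_m)
  from the right factor to the left one.\<close>
lemma kt_block_leading_telescope:
  assumes "1 \<le> m" and "m \<notin> J"
  shows "(\<Sum>r\<in>{1..l m}. kd_face (madd a (kt_left l m r)) (insert m J) (kt_right l m r) m y)
           = bvec (shifted a J l (m - 1)) y - (bvec (shifted a J l m) y :: 'k::field)"
proof -
  define g where "g r = (bvec (madd a (kt_left l m r), J, kt_right l m (Suc r)) y :: 'k)" for r
  have "kd_face (madd a (kt_left l m r)) (insert m J) (kt_right l m r) m y = g (r - 1) - g r"
    if "r \<in> {1..l m}" for r
  proof -
    have "madd (madd a (kt_left l m r)) (ue m) = madd a (kt_left l m (r - 1))"
      and "kt_right l m r = kt_right l m (Suc (r - 1))"
      and "madd (kt_right l m r) (ue m) = kt_right l m (Suc r)"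
      using that by (auto simp: fun_eq_iff madd_def kt_left_def kt_right_def ue_def)
    moreover have "insert m J - {m} = J" using assms(2) by simp
    ultimately show ?thesis by (simp add: kd_face_def g_def)
  qed
  then have "(\<Sum>r\<in>{1..l m}. kd_face (madd a (kt_left l m r)) (insert m J) (kt_right l m r) m y)
               = (\<Sum>r\<in>{0+1..l m}. g (r - 1) - g r)"
    by simp
  also have "\<dots> = g 0 - g (l m)" by (rule telescope_down) simp
  moreover have "g 0 = bvec (shifted a J l (m - 1)) y" and "g (l m) = bvec (shifted a J l m) y"
    using assms(1) by (auto simp: g_def shifted_def kt_left_def kt_right_def madd_def fun_eq_iff
                             intro!: arg_cong[where f="\<lambda>x. bvec x y"])
  ultimately show ?thesis by simp
qed

lemma kd_leading_telescope:
  assumes "M \<le> N" and "\<forall>i>N. l i = 0" and "\<forall>j\<in>J. j \<le> M"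
  shows "(\<Sum>m\<in>{M+1..N}. \<Sum>r\<in>{1..l m}. kd_face (madd a (kt_left l m r)) (insert m J) (kt_right l m r) m y)
           = bvec (shifted a J l M) y - (bvec (a, J, l) y :: 'k::field)"
proof -
  have "(\<Sum>m\<in>{M+1..N}. \<Sum>r\<in>{1..l m}. kd_face (madd a (kt_left l m r)) (insert m J) (kt_right l m r) m y)
          = (\<Sum>m\<in>{M+1..N}. bvec (shifted a J l (m - 1)) y - (bvec (shifted a J l m) y :: 'k))"
    using assms(3) by (intro sum.cong refl kt_block_leading_telescope) auto
  also have "\<dots> = bvec (shifted a J l M) y - bvec (shifted a J l N) y"
    by (rule telescope_down[OF assms(1)])
  finally show ?thesis by (simp add: shifted_top[OF assms(2)])
qed

definition cross_terms :: "nat \<Rightarrow> (nat \<Rightarrow> nat) \<Rightarrow> nat set \<Rightarrow> (nat \<Rightarrow> nat) \<Rightarrow> nat \<Rightarrow> triple \<Rightarrow> 'k::field" where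
  "cross_terms N a J l j = (\<lambda>y. \<Sum>m\<in>{Max0 J + 1..N}. \<Sum>r\<in>{1..l m}.
      kd_face (madd a (kt_left l m r)) (insert m J) (kt_right l m r) j y)"

lemma kd_kt_basis:
  assumes "finite J" and "J \<subseteq> {1..N}" and "\<forall>i>N. l i = 0"
  shows "kd (kt_basis N (a, J, l)) y = (-1) ^ (card J + 1) *
           ((-1) ^ card J * (bvec (shifted a J l (Max0 J)) y - bvec (a, J, l) y)
            + (\<Sum>j\<in>J. (-1) ^ card {i\<in>J. i < j} * (cross_terms N a J l j y :: 'k::field)))"
proof -
  let ?M = "Max0 J"
  let ?face = "\<lambda>j m r. kd_face (madd a (kt_left l m r)) (insert m J) (kt_right l m r) j y :: 'k"
  have below: "\<forall>i\<in>J. i < m" if "m \<in> {?M + 1..N}" for m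
    using that Max0_ge[OF assms(1)] by fastforce
  have "kd (kt_basis N (a, J, l)) y = (-1) ^ (card J + 1) *
          (\<Sum>m\<in>{?M + 1..N}. \<Sum>r\<in>{1..l m}. kd_basis (madd a (kt_left l m r), insert m J, kt_right l m r) y)"
    by (simp add: kd_def lin_ext_kt_basis)
  also have "(\<Sum>m\<in>{?M + 1..N}. \<Sum>r\<in>{1..l m}. kd_basis (madd a (kt_left l m r), insert m J, kt_right l m r) y)
     = (\<Sum>m\<in>{?M + 1..N}. \<Sum>r\<in>{1..l m}. (-1) ^ card J * ?face m m r
          + (\<Sum>j\<in>J. (-1) ^ card {i\<in>J. i < j} * ?face j m r))"
    using below by (intro sum.cong refl kd_basis_insert_max[OF assms(1)]) auto
  also have "\<dots> = (-1) ^ card J * (\<Sum>m\<in>{?M + 1..N}. \<Sum>r\<in>{1..l m}. ?face m m r)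
          + (\<Sum>j\<in>J. (-1) ^ card {i\<in>J. i < j} * cross_terms N a J l j y)"
    by (simp add: sum.distrib sum_distrib_left cross_terms_def sum.swap[of _ J])
  also have "(\<Sum>m\<in>{?M + 1..N}. \<Sum>r\<in>{1..l m}. ?face m m r) = bvec (shifted a J l ?M) y - bvec (a, J, l) y"
    using Max0_ge[OF assms(1)] by (intro kd_leading_telescope Max0_le assms) auto
  finally show ?thesis .
qed

text \<open>How the blocks of t react to moving x_j from right to left, for m below, above and equal
  to j.  Below j nothing changes; above j the difference is the j-th face of the block;
  at m = j only the extra top term r = l_j + 1 survives, which is the shifted element.\<close>
lemma kt_block_face_below:
  assumes "m < j"
  shows "kt_block (madd a (ue j)) J l m = kt_block a J (madd l (ue j)) m"
proof -
  have "madd l (ue j) m = l m" using assms by (simp add: madd_def ue_def)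
  moreover have "madd (madd a (ue j)) (kt_left l m r) = madd a (kt_left (madd l (ue j)) m r)"
    and "kt_right (madd l (ue j)) m r = kt_right l m r" for r
    using assms by (auto simp: fun_eq_iff kt_left_def kt_right_def madd_def ue_def)
  ultimately show ?thesis by (simp add: kt_block_def)
qed

lemma kt_block_face_above:
  assumes "j < m"
  shows "kt_block (madd a (ue j)) (J - {j}) l m y - kt_block a (J - {j}) (madd l (ue j)) m y
           = (\<Sum>r\<in>{1..l m}. kd_face (madd a (kt_left l m r)) (insert m J) (kt_right l m r) j y :: 'k::field)"
proof -
  have "madd l (ue j) m = l m" and "insert m (J - {j}) = insert m J - {j}"
    using assms by (auto simp: madd_def ue_def)
  moreover have "madd (madd a (ue j)) (kt_left l m r) = madd (madd a (kt_left l m r)) (ue j)"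
    and "kt_left (madd l (ue j)) m r = kt_left l m r"
    and "kt_right (madd l (ue j)) m r = madd (kt_right l m r) (ue j)" for r
    using assms by (auto simp: fun_eq_iff kt_left_def kt_right_def madd_def ue_def)
  ultimately show ?thesis by (simp add: kt_block_def kd_face_def sum_subtractf)
qed

lemma kt_block_face_at:
  "kt_block (madd a (ue m)) J l m y - kt_block a J (madd l (ue m)) m y
     = - (bvec (shifted a (insert m J) l m) y :: 'k::field)"
proof -
  let ?l' = "madd l (ue m)"
  have top: "?l' m = Suc (l m)" by (simp add: madd_def ue_def)
  have "madd a (kt_left ?l' m r) = madd (madd a (ue m)) (kt_left l m r)"
    and "kt_right ?l' m r = kt_right l m r" if "r \<le> l m" for r
    using that by (auto simp: fun_eq_iff kt_left_def kt_right_def madd_def ue_def)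
  then have "kt_block a J ?l' m y = (kt_block (madd a (ue m)) J l m y :: 'k)
               + bvec (madd a (kt_left ?l' m (Suc (l m))), insert m J, kt_right ?l' m (Suc (l m))) y"
    by (simp add: kt_block_def top)
  moreover have "(madd a (kt_left ?l' m (Suc (l m))), insert m J, kt_right ?l' m (Suc (l m)))
                   = shifted a (insert m J) l m"
    by (auto simp: fun_eq_iff shifted_def kt_left_def kt_right_def madd_def ue_def)
  ultimately show ?thesis by simp
qed

lemma kt_face_difference:
  assumes "finite J" and "J \<subseteq> {1..N}" and "j \<in> J"
  shows "kt_basis N (madd a (ue j), J - {j}, l) y - kt_basis N (a, J - {j}, madd l (ue j)) y
           = (-1) ^ card J * cross_terms N a J l j y
             + (if j = Max0 J then - ((-1) ^ card J * bvec (shifted a J l (Max0 J)) y) else (0 :: 'k::field))"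
proof -
  let ?M = "Max0 J" and ?M' = "Max0 (J - {j})"
  define D where "D m = kt_block (madd a (ue j)) (J - {j}) l m y - (kt_block a (J - {j}) (madd l (ue j)) m y :: 'k)"
    for m
  have "card (J - {j}) + 1 = card J"
    using assms(1,3) by (simp add: card_Diff_singleton) (metis card_gt_0_iff Suc_pred empty_iff)
  then have lhs: "kt_basis N (madd a (ue j), J - {j}, l) y - kt_basis N (a, J - {j}, madd l (ue j)) y
                    = (-1) ^ card J * (\<Sum>m\<in>{?M' + 1..N}. D m)"
    by (simp add: kt_basis_blocks D_def sum_subtractf sum_distrib_left right_diff_distrib)
  have jM: "j \<le> ?M" and MN: "?M \<le> N" using assms Max0_ge Max0_le by auto
  have M'M: "?M' \<le> ?M" using assms(1) Max0_remove_other[OF assms(1,3)] by (cases "j = ?M") (auto simp: Max0_def)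
  have above: "(\<Sum>m\<in>{?M + 1..N}. D m) = cross_terms N a J l j y"
    unfolding cross_terms_def D_def using jM by (intro sum.cong refl kt_block_face_above) auto
  have low: "(\<Sum>m\<in>{?M' + 1..?M}. D m) = (if j = ?M then - bvec (shifted a J l ?M) y else 0)"
  proof (cases "j = ?M")
    case True
    have "0 < j" using assms(2,3) by auto
    then have "?M' < ?M" using Max0_remove_max[OF assms(1,3)] True by simp
    then have range: "{?M' + 1..?M} = insert ?M {?M' + 1..<?M}" by auto
    have "D m = 0" if "m < ?M" for m
      using that True by (simp add: D_def kt_block_face_below)
    moreover have "D ?M = - bvec (shifted a J l ?M) y"
      using kt_block_face_at[of a ?M "J - {j}" l y] assms(3) True by (simp add: D_def insert_absorb)
    ultimately show ?thesis unfolding range using True by simp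
  next
    case False
    then show ?thesis using Max0_remove_other[OF assms(1,3)] by simp
  qed
  have "{?M' + 1..N} = {?M' + 1..?M} \<union> {?M + 1..N}" using M'M MN by auto
  then have "(\<Sum>m\<in>{?M' + 1..N}. D m) = (\<Sum>m\<in>{?M' + 1..?M}. D m) + (\<Sum>m\<in>{?M + 1..N}. D m)"
    by (simp add: sum.union_disjoint ivl_disj_int)
  then show ?thesis unfolding lhs low above by (simp add: algebra_simps)
qed

lemma homotopy_basis_positive:
  assumes "finite J" and "J \<subseteq> {1..N}" and "J \<noteq> {}" and "\<forall>i>N. l i = 0"
  shows "kt N (kd_basis (a, J, l)) + kd (kt_basis N (a, J, l)) = (bvec (a, J, l) :: _ \<Rightarrow> 'k::field)"
proof
  fix y
  let ?M = "Max0 J"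
  define s :: 'k where "s = (-1) ^ card J"
  define \<sigma> :: "nat \<Rightarrow> 'k" where "\<sigma> j = (-1) ^ card {i\<in>J. i < j}" for j
  define T where "T = (\<Sum>j\<in>J. \<sigma> j * cross_terms N a J l j y)"
  define H :: 'k where "H = bvec (shifted a J l ?M) y"
  have MJ: "?M \<in> J" using assms(1,3) by (simp add: Max0_def)
  have "{i\<in>J. i < ?M} = J - {?M}" using Max0_ge[OF assms(1)] by force
  then have card_below: "card {i\<in>J. i < ?M} + 1 = card J" using assms(1) MJ
    by (simp add: card_Diff_singleton) (metis card_gt_0_iff Suc_pred empty_iff)
  have sign_max: "\<sigma> ?M * s = -1"
    unfolding \<sigma>_def s_def by (simp flip: card_below power_add)
  have ss: "s * s = 1" by (simp add: s_def flip: power_add)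
  have "kt N (kd_basis (a, J, l)) y
          = (\<Sum>j\<in>J. \<sigma> j * (s * cross_terms N a J l j y) + (if j = ?M then \<sigma> ?M * - (s * H) else 0))"
    unfolding kt_def lin_ext_kd_basis[OF assms(1)] \<sigma>_def s_def H_def
    by (intro sum.cong refl) (simp add: kt_face_difference[OF assms(1,2)] distrib_left)
  also have "\<dots> = s * T + H"
    using MJ assms(1) sign_max by (simp add: sum.distrib T_def sum_distrib_left algebra_simps)
  finally have tkd: "kt N (kd_basis (a, J, l)) y = s * T + H" .
  have dkt: "kd (kt_basis N (a, J, l)) y = - s * (s * (H - bvec (a, J, l) y) + T)"
    unfolding kd_kt_basis[OF assms(1,2,4)] by (simp add: s_def H_def T_def \<sigma>_def)
  have "(kt N (kd_basis (a, J, l)) + kd (kt_basis N (a, J, l))) y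
          = s * T + H + - s * (s * (H - bvec (a, J, l) y) + T)"
    by (simp only: plus_fun_apply tkd dkt)
  also have "\<dots> = H - (s * s) * (H - bvec (a, J, l) y)"
    by (simp add: algebra_simps)
  finally show "(kt N (kd_basis (a, J, l)) + kd (kt_basis N (a, J, l))) y = (bvec (a, J, l) y :: 'k)"
    by (simp add: ss)
qed

lemma homotopy_basis_zero:
  assumes "\<forall>i>N. l i = 0" and "l 0 = 0"
  shows "tm1 (kd0 (bvec (a, {}, l))) + kd (kt_basis N (a, {}, l)) = (bvec (a, {}, l) :: _ \<Rightarrow> 'k::field)"
proof -
  have "(madd a l, {}, zmono) = shifted a {} l 0"
    using assms(2) by (auto simp: shifted_def madd_def zmono_def fun_eq_iff)
  then have "tm1 (kd0 (bvec (a, {}, l))) = (bvec (shifted a {} l 0) :: _ \<Rightarrow> 'k)"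
    by (simp add: kd0_def tm1_def lin_ext_bvec)
  moreover have "kd (kt_basis N (a, {}, l)) y = bvec (a, {}, l) y - (bvec (shifted a {} l 0) y :: 'k)" for y
    using kd_kt_basis[of "{}" N l a y] assms(1) by (simp add: Max0_def)
  ultimately show ?thesis by (simp add: fun_eq_iff)
qed

lemma Kmod_support:
  assumes "c \<in> Kmod N p" and "c (a, J, l) \<noteq> 0"
  shows "finite J" and "J \<subseteq> {1..N}" and "card J = p" and "\<forall>i>N. l i = 0" and "l 0 = 0"
proof -
  show J: "J \<subseteq> {1..N}" and "card J = p" using assms unfolding Kmod_def by blast+
  show "finite J" using J by (rule finite_subset) simp
  have "l \<in> monoms N" using assms unfolding Kmod_def by blast
  then show "\<forall>i>N. l i = 0" and "l 0 = 0" unfolding monoms_def by force+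
qed

lemma contraction_augmentation:
  assumes "f \<in> Apoly N"
  shows "kd0 (tm1 f) = f"
proof -
  have fin: "finite {a. f a \<noteq> 0}" using assms by (simp add: Apoly_def)
  have "kd0 (tm1 f) = lin_ext (\<lambda>a. kd0 (bvec (a, {}, zmono))) f"
    unfolding kd0_def tm1_def by (rule lin_ext_compose[OF fin finite_support_bvec])
  also have "\<dots> = lin_ext bvec f"
  proof (rule lin_ext_cong)
    fix a
    have "madd a zmono = a" by (simp add: fun_eq_iff madd_def zmono_def)
    then show "kd0 (bvec (a, {}, zmono)) = bvec a" by (simp add: kd0_def lin_ext_bvec)
  qed
  also have "\<dots> = f" by (rule lin_ext_bvec_id[OF fin])
  finally show ?thesis .
qed

lemma kd_kt_expand:
  assumes "finite {b. c b \<noteq> 0}"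
  shows "kd (kt N c) = lin_ext (\<lambda>b. kd (kt_basis N b)) (c :: _ \<Rightarrow> 'k::field)"
  unfolding kt_def kd_def by (rule lin_ext_compose[OF assms finite_support_kt_basis])

lemma contraction_degree_zero:
  assumes "c \<in> Kmod N 0"
  shows "tm1 (kd0 c) + kd (kt N c) = c"
proof -
  have fin: "finite {b. c b \<noteq> 0}" using assms by (simp add: Kmod_def)
  have fin_mult: "finite {z. ((case x of (a, J, b) \<Rightarrow> bvec (madd a b)) z :: 'a) \<noteq> 0}" for x
    by (cases x) (simp add: finite_support_bvec)
  have "tm1 (kd0 c) = lin_ext (\<lambda>b. tm1 (kd0 (bvec b))) c"
    unfolding tm1_def kd0_def by (simp only: lin_ext_compose[OF fin fin_mult] lin_ext_bvec)
  then have "tm1 (kd0 c) + kd (kt N c) = lin_ext (\<lambda>b. tm1 (kd0 (bvec b)) + kd (kt_basis N b)) c"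
    by (simp add: lin_ext_add kd_kt_expand[OF fin])
  also have "\<dots> = lin_ext bvec c"
  proof (rule lin_ext_cong)
    fix b assume nz: "c b \<noteq> 0"
    obtain a J l where b: "b = (a, J, l)" by (cases b)
    have "J = {}" "\<forall>i>N. l i = 0" "l 0 = 0"
      using Kmod_support[OF assms nz[unfolded b]] by auto
    then show "tm1 (kd0 (bvec b)) + kd (kt_basis N b) = bvec b"
      unfolding b by (simp add: homotopy_basis_zero)
  qed
  also have "\<dots> = c" by (rule lin_ext_bvec_id[OF fin])
  finally show ?thesis .
qed

lemma contraction_positive:
  assumes "1 \<le> p" and "c \<in> Kmod N p"
  shows "kt N (kd c) + kd (kt N c) = c"
proof -
  have fin: "finite {b. c b \<noteq> 0}" using assms by (simp add: Kmod_def)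
  have "kt N (kd c) = lin_ext (\<lambda>b. kt N (kd_basis b)) c"
    unfolding kt_def kd_def by (rule lin_ext_compose[OF fin finite_support_kd_basis])
  then have "kt N (kd c) + kd (kt N c) = lin_ext (\<lambda>b. kt N (kd_basis b) + kd (kt_basis N b)) c"
    by (simp add: lin_ext_add kd_kt_expand[OF fin])
  also have "\<dots> = lin_ext bvec c"
  proof (rule lin_ext_cong)
    fix b assume nz: "c b \<noteq> 0"
    obtain a J l where b: "b = (a, J, l)" by (cases b)
    note J = Kmod_support[OF assms(2) nz[unfolded b]]
    have "J \<noteq> {}" using J(3) assms(1) by auto
    then show "kt N (kd_basis b) + kd (kt_basis N b) = bvec b"
      unfolding b by (rule homotopy_basis_positive[OF J(1,2) _ J(4)])
  qed
  also have "\<dots> = c" by (rule lin_ext_bvec_id[OF fin])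
  finally show ?thesis .
qed

theorem mainTheorem2:
  fixes N :: nat
  shows "(\<forall>f \<in> (Apoly N :: ((nat \<Rightarrow> nat) \<Rightarrow> 'k::field) set). kd0 (tm1 f) = f)
    \<and> (\<forall>c \<in> (Kmod N 0 :: (_ \<Rightarrow> 'k) set). tm1 (kd0 c) + kd (kt N c) = c)
    \<and> (\<forall>p \<ge> 1. \<forall>c \<in> (Kmod N p :: (_ \<Rightarrow> 'k) set). kt N (kd c) + kd (kt N c) = c)"
  using contraction_augmentation contraction_degree_zero contraction_positive by blast

end
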